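(* Consider a system of miners and clients communicating by message passing, in which clients broadcast transactions to the miners inside protocol messages and transactions are recorded in blocks of a valid blockchain $BT$. Suppose a (Byzantine) miner $M$ executes a front-running attack: it reads an unconfirmed transaction $t_x$ (i.e., it delivers the message $m_x$ containing $t_x$) and afterwards broadcasts its own transaction $t_y$ (in a message $m_y$), and the attack succeeds, i.e., $t_y$ is recorded before $t_x$ in the consensus chain of $BT$. Then $t_x \rightarrow t_y$ (equivalently $m_x \rightarrow m_y$), and so recording $t_y$ before $t_x$ violates causal ordering (strong safety): a front-running attack is a violation of causal ordering.
   Context: Happens-before relation $\rightarrow$ on messages: (1) the set of messages delivered from any process $p_i$ by a process is totally ordered by $\rightarrow$; (2) if $p_i$ sent or delivered message $m$ before sending message $m'$, then $m\rightarrow m'$; (3) $\rightarrow$ is transitive. For transactions $t_1,t_2$ contained in messages $m_1,m_2$, $t_1\rightarrow t_2$ iff $m_1\rightarrow m_2$. The causal past $CP(t)$ of a transaction $t$ is the set of transactions $t'$ with $t'\rightarrow t$. Strong safety (causal ordering) for a blockchain $BT$ requires: for every transaction $t$ and every $t'\in CP(t)$, $t'$ is recorded in $BT$ before $t$; for messages it requires that for all $m'\in CP(m)$ sent to the same correct processes, no correct process delivers (consumes) $m$ before $m'$. A block contains a totally ordered sequence of transactions and the hash of its parent block; a blockchain is a tree of blocks; its consensus chain is a sequence of blocks $B_0,B_1,\dots,B_l$ from the genesis block with $B_k$ the parent of $B_{k+1}$, of maximal depth; $BT$ is valid if it has exactly one consensus chain. Transaction $t_y$ is recorded before $t_x$ in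 the consensus chain if it lies in an earlier block, or in the same block ordered before $t_x$. A front-running attack: a Byzantine miner reads an unconfirmed transaction $t_x$ and broadcasts/mines its own transaction $t_y$ with the intention of recording $t_y$ before $t_x$ in the consensus chain of a valid blockchain. *)

theory Defs
  imports Main
begin

datatype 'm event = Send 'm | Deliver 'm

inductive hb :: "('p \<Rightarrow> 'm event list) \<Rightarrow> 'm \<Rightarrow> 'm \<Rightarrow> bool"
  for hist :: "'p \<Rightarrow> 'm event list" where
  local_order: "\<lbrakk> i < j; j < length (hist p);
                  hist p ! i = Send m \<or> hist p ! i = Deliver m;
                  hist p ! j = Send m' \<rbrakk> \<Longrightarrow> hb hist m m'"
| trans: "\<lbrakk> hb hist m1 m2; hb hist m2 m3 \<rbrakk> \<Longrightarrow> hb hist m1 m3"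

definition tx_hb :: "('p \<Rightarrow> 'm event list) \<Rightarrow> ('t \<Rightarrow> 'm) \<Rightarrow> 't \<Rightarrow> 't \<Rightarrow> bool" where
  "tx_hb hist msg_of t1 t2 \<longleftrightarrow> hb hist (msg_of t1) (msg_of t2)"

definition is_chain :: "'b set \<Rightarrow> 'b \<Rightarrow> ('b \<Rightarrow> 'b option) \<Rightarrow> 'b list \<Rightarrow> bool" where
  "is_chain BT gen parent c \<longleftrightarrow> c \<noteq> [] \<and> hd c = gen \<and> set c \<subseteq> BT \<and>
     (\<forall>i. Suc i < length c \<longrightarrow> parent (c ! Suc i) = Some (c ! i))"

definition consensus_chain :: "'b set \<Rightarrow> 'b \<Rightarrow> ('b \<Rightarrow> 'b option) \<Rightarrow> 'b list \<Rightarrow> bool" where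
  "consensus_chain BT gen parent c \<longleftrightarrow> is_chain BT gen parent c \<and>
     (\<forall>c'. is_chain BT gen parent c' \<longrightarrow> length c' \<le> length c)"

definition valid_bt :: "'b set \<Rightarrow> 'b \<Rightarrow> ('b \<Rightarrow> 'b option) \<Rightarrow> bool" where
  "valid_bt BT gen parent \<longleftrightarrow> (\<exists>!c. consensus_chain BT gen parent c)"

definition the_consensus_chain :: "'b set \<Rightarrow> 'b \<Rightarrow> ('b \<Rightarrow> 'b option) \<Rightarrow> 'b list" where
  "the_consensus_chain BT gen parent = (THE c. consensus_chain BT gen parent c)"

text \<open>a is recorded before b in the sequence of transactions of a chain: both are
  recorded and the (first) record of a precedes the (first) record of b, i.e.
  it is in an earlier block, or in the same block ordered before.\<close>
definition recorded_before_in :: "('b \<Rightarrow> 't list) \<Rightarrow> 'b list \<Rightarrow> 't \<Rightarrow> 't \<Rightarrow> bool" where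
  "recorded_before_in txs c a b \<longleftrightarrow>
     (let fl = concat (map txs c) in
      \<exists>i j. i < j \<and> j < length fl \<and> fl ! i = a \<and> fl ! j = b \<and>
            (\<forall>k<i. fl ! k \<noteq> a) \<and> (\<forall>k<j. fl ! k \<noteq> b))"

definition recorded_before :: "'b set \<Rightarrow> 'b \<Rightarrow> ('b \<Rightarrow> 'b option) \<Rightarrow> ('b \<Rightarrow> 't list)
    \<Rightarrow> 't \<Rightarrow> 't \<Rightarrow> bool" where
  "recorded_before BT gen parent txs a b =
     recorded_before_in txs (the_consensus_chain BT gen parent) a b"

definition strong_safety :: "('p \<Rightarrow> 'm event list) \<Rightarrow> ('t \<Rightarrow> 'm) \<Rightarrow>
    'b set \<Rightarrow> 'b \<Rightarrow> ('b \<Rightarrow> 'b option) \<Rightarrow> ('b \<Rightarrow> 't list) \<Rightarrow> bool" where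
  "strong_safety hist msg_of BT gen parent txs \<longleftrightarrow>
     (\<forall>t t'. tx_hb hist msg_of t' t \<longrightarrow> recorded_before BT gen parent txs t' t)"

end

theory Submission
  imports Defs
begin

text \<open>A front-running miner delivers \<open>m\<^sub>x\<close> and only then sends \<open>m\<^sub>y\<close>, so \<open>m\<^sub>x \<rightarrow> m\<^sub>y\<close> by the
  local-order rule of happens-before. Causal ordering would then force \<open>t\<^sub>x\<close> to be recorded
  before \<open>t\<^sub>y\<close>; but "recorded before" compares first occurrences in the transaction sequence
  of a chain and is therefore asymmetric, contradicting the success of the attack.\<close>

lemma hb_deliver_before_send:
  assumes "i < j" and "j < length (hist p)"
    and "hist p ! i = Deliver m" and "hist p ! j = Send m'"
  shows "hb hist m m'"
  using assms by (blast intro: hb.local_order)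

lemma first_occurrence_unique:
  assumes "xs ! i = x" "\<forall>k<i. xs ! k \<noteq> x" and "xs ! i' = x" "\<forall>k<i'. xs ! k \<noteq> x"
  shows "i = i'"
  using assms by (metis linorder_neqE)

lemma recorded_before_in_asym:
  assumes "recorded_before_in txs c a b"
  shows "\<not> recorded_before_in txs c b a"
proof
  let ?fl = "concat (map txs c)"
  assume "recorded_before_in txs c b a"
  then obtain j' i' where "j' < i'"
    and b': "?fl ! j' = b" "\<forall>k<j'. ?fl ! k \<noteq> b"
    and a': "?fl ! i' = a" "\<forall>k<i'. ?fl ! k \<noteq> a"
    unfolding recorded_before_in_def Let_def by blast
  from assms obtain i j where "i < j"
    and a: "?fl ! i = a" "\<forall>k<i. ?fl ! k \<noteq> a"
    and b: "?fl ! j = b" "\<forall>k<j. ?fl ! k \<noteq> b"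
    unfolding recorded_before_in_def Let_def by blast
  have "i = i'" using a a' by (rule first_occurrence_unique)
  moreover have "j = j'" using b b' by (rule first_occurrence_unique)
  ultimately show False using \<open>i < j\<close> \<open>j' < i'\<close> by simp
qed

text \<open>No validity hypothesis is needed: asymmetry holds for every list of blocks, in particular
  for whatever \<^const>\<open>the_consensus_chain\<close> denotes.\<close>

lemma recorded_before_asym:
  "recorded_before BT gen parent txs a b \<Longrightarrow> \<not> recorded_before BT gen parent txs b a"
  unfolding recorded_before_def by (rule recorded_before_in_asym)

lemma hb_recorded_reversed_violates_strong_safety:
  assumes "tx_hb hist msg_of t t'" and "recorded_before BT gen parent txs t' t"
  shows "\<not> strong_safety hist msg_of BT gen parent txs"
proof
  assume "strong_safety hist msg_of BT gen parent txs"
  with assms(1) have "recorded_before BT gen parent txs t t'"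
    unfolding strong_safety_def by blast
  then show False
    using recorded_before_asym[OF assms(2)] by contradiction
qed

theorem theorem1:
  fixes hist :: "'p \<Rightarrow> 'm event list" and msg_of :: "'t \<Rightarrow> 'm"
    and BT :: "'b set" and gen :: 'b and parent :: "'b \<Rightarrow> 'b option"
    and txs :: "'b \<Rightarrow> 't list"
    and M :: 'p and mx my :: 'm and tx ty :: 't and i j :: nat
  assumes valid: "valid_bt BT gen parent"
    and in_x: "msg_of tx = mx" and in_y: "msg_of ty = my"
    and read: "hist M ! i = Deliver mx"
    and bcast: "hist M ! j = Send my"
    and after: "i < j" and j_len: "j < length (hist M)"
    and success: "recorded_before BT gen parent txs ty tx"
  shows "tx_hb hist msg_of tx ty \<and> hb hist mx my \<and>
         \<not> strong_safety hist msg_of BT gen parent txs"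
proof -
  have msg_hb: "hb hist mx my"
    using after j_len read bcast by (rule hb_deliver_before_send)
  then have tx_order: "tx_hb hist msg_of tx ty"
    using in_x in_y by (simp add: tx_hb_def)
  moreover have "\<not> strong_safety hist msg_of BT gen parent txs"
    using tx_order success by (rule hb_recorded_reversed_violates_strong_safety)
  ultimately show ?thesis using msg_hb by blast
qed

end
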